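(* There exist a map $v:\mathbb Z^2\to\mathbb R^2$, constants $0<m\le M<\infty$, and a constant $r>0$ such that: $v(x)\ne v(y)$ for all distinct $x,y\in\mathbb Z^2$; $m\le\|v(x)\|\le M$ for all $x\in\mathbb Z^2$; and for all distinct $x,y\in\mathbb Z^2$, \[\inf_{t\in\mathbb R}\|(x+t v(x))-(y+t v(y))\|\ge r .\] Consequently, closed disks of any radius $\rho<r/2$ centered at the moving points $x+tv(x)$, $x\in\mathbb Z^2$, are pairwise disjoint for every $t\in\mathbb R$.
   Context: $\|\cdot\|$ is the Euclidean norm on $\mathbb R^2$. Each point $x\in\mathbb Z^2$ moves as $x(t)=x+tv(x)$, $t\in\mathbb R$. *)

theory Defs
  imports "HOL-Analysis.Analysis"
begin

definition lat :: "int \<times> int \<Rightarrow> real \<times> real" where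
  "lat x = (real_of_int (fst x), real_of_int (snd x))"

definition pos :: "(int \<times> int \<Rightarrow> real \<times> real) \<Rightarrow> int \<times> int \<Rightarrow> real \<Rightarrow> real \<times> real" where
  "pos v x t = lat x + t *\<^sub>R v x"

end

theory Submission
  imports Defs
begin

text \<open>
  Let every lattice point \<open>(a, b)\<close> move with velocity \<open>(- f b, f a)\<close>, where \<open>f\<close> is a
  bounded, strictly increasing function on the integers with positive values. For two distinct
  points the relative velocity \<open>w\<close> is orthogonal to \<open>u = (f a - f a', f b - f b')\<close>, so the
  component of the relative position along \<open>u\<close> never changes. Since \<open>a - a'\<close> is an integer
  of the same sign as \<open>f a - f a'\<close>, that component is at least
  \<open>(\<bar>u\<^sub>1\<bar> + \<bar>u\<^sub>2\<bar>) / norm u \<ge> 1\<close>, hence the points always stay at distance at least 1.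
\<close>

lemma abs_diff_le_of_int_diff_mult_diff:
  fixes f :: "int \<Rightarrow> 'a::linordered_idom"
  assumes "strict_mono f"
  shows "\<bar>f a - f b\<bar> \<le> of_int (a - b) * (f a - f b)"
proof (cases a b rule: linorder_cases)
  case less
  then have "of_int (a - b) \<le> (of_int (- 1) :: 'a)"
    by (subst of_int_le_iff) linarith
  moreover have "f a - f b < 0"
    using less assms by (simp add: strict_mono_less)
  ultimately have "of_int (- 1) * (f a - f b) \<le> of_int (a - b) * (f a - f b)"
    by (intro mult_right_mono_neg) simp_all
  with \<open>f a - f b < 0\<close> show ?thesis
    by simp
next
  case greater
  then have "(of_int 1 :: 'a) \<le> of_int (a - b)"
    by (subst of_int_le_iff) linarith
  moreover have "0 < f a - f b"
    using greater assms by (simp add: strict_mono_less)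
  ultimately have "of_int 1 * (f a - f b) \<le> of_int (a - b) * (f a - f b)"
    by (intro mult_right_mono) simp_all
  with \<open>0 < f a - f b\<close> show ?thesis
    by simp
qed simp

lemma abs_inner_le_norm_add_scaleR_orthogonal:
  fixes c u w :: "'a::real_inner"
  assumes "u \<bullet> w = 0"
  shows "\<bar>c \<bullet> u\<bar> \<le> norm (c + t *\<^sub>R w) * norm u"
proof -
  have "w \<bullet> u = 0"
    using assms by (simp add: inner_commute)
  then have "(c + t *\<^sub>R w) \<bullet> u = c \<bullet> u"
    by (simp add: inner_add_left)
  then show ?thesis
    using Cauchy_Schwarz_ineq2[of "c + t *\<^sub>R w" u] by simp
qed

lemma pos_diff: "pos v x t - pos v y t = (lat x - lat y) + t *\<^sub>R (v x - v y)"
  unfolding pos_def by (simp add: algebra_simps)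

definition cross_velocity :: "(int \<Rightarrow> real) \<Rightarrow> int \<times> int \<Rightarrow> real \<times> real" where
  "cross_velocity f x = (- f (snd x), f (fst x))"

lemma inj_cross_velocity:
  assumes "strict_mono f"
  shows "inj (cross_velocity f)"
  using strict_mono_eq[OF assms] by (intro injI) (auto simp: cross_velocity_def prod_eq_iff)

lemma norm_cross_velocity_bounds:
  assumes "0 \<le> m" and "\<And>n. m \<le> f n \<and> f n \<le> M"
  shows "m \<le> norm (cross_velocity f x) \<and> norm (cross_velocity f x) \<le> 2 * M"
proof
  have "norm (f (fst x)) \<le> norm (cross_velocity f x)"
    unfolding cross_velocity_def by (rule norm_snd_le)
  then show "m \<le> norm (cross_velocity f x)"
    using assms(2)[of "fst x"] abs_ge_self[of "f (fst x)"] by simp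
  have "norm (cross_velocity f x) \<le> \<bar>f (snd x)\<bar> + \<bar>f (fst x)\<bar>"
    using norm_Pair_le[of "- f (snd x)" "f (fst x)"] unfolding cross_velocity_def by simp
  then show "norm (cross_velocity f x) \<le> 2 * M"
    using assms(1) assms(2)[of "fst x"] assms(2)[of "snd x"] by (simp add: abs_of_nonneg)
qed

lemma cross_velocity_separation:
  assumes "strict_mono f" and "x \<noteq> y"
  shows "1 \<le> norm (pos (cross_velocity f) x t - pos (cross_velocity f) y t)"
proof -
  obtain a b a' b' where xy: "x = (a, b)" "y = (a', b')" by fastforce
  define u where "u = (f a - f a', f b - f b')"
  have "u \<noteq> 0"
    using assms strict_mono_eq[OF assms(1)] unfolding u_def xy by (auto simp: zero_prod_def)
  have orthogonal: "u \<bullet> (cross_velocity f x - cross_velocity f y) = 0"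
    unfolding u_def xy cross_velocity_def by (simp add: algebra_simps)
  have "norm u \<le> \<bar>f a - f a'\<bar> + \<bar>f b - f b'\<bar>"
    using norm_Pair_le unfolding u_def by (metis real_norm_def)
  also have "\<dots> \<le> (lat x - lat y) \<bullet> u"
    using abs_diff_le_of_int_diff_mult_diff[OF assms(1), of a a']
      abs_diff_le_of_int_diff_mult_diff[OF assms(1), of b b']
    unfolding u_def xy lat_def by simp
  also have "\<dots> \<le> norm (pos (cross_velocity f) x t - pos (cross_velocity f) y t) * norm u"
    using abs_inner_le_norm_add_scaleR_orthogonal[OF orthogonal, of "lat x - lat y" t]
    unfolding pos_diff by linarith
  finally show ?thesis
    using \<open>u \<noteq> 0\<close> by simp
qed

definition arctan_speed :: "int \<Rightarrow> real" where
  "arctan_speed n = 3 + arctan (real_of_int n)"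

lemma strict_mono_arctan_speed: "strict_mono arctan_speed"
  by (simp add: strict_mono_def arctan_speed_def arctan_less_iff)

lemma arctan_speed_bounds: "1 \<le> arctan_speed n \<and> arctan_speed n \<le> 5"
  using arctan_bounded[of "real_of_int n"] pi_gt3 pi_less_4 unfolding arctan_speed_def by auto

theorem corollary3:
  shows "\<exists>(v :: int \<times> int \<Rightarrow> real \<times> real) (m::real) (M::real) (r::real).
     0 < m \<and> m \<le> M \<and> 0 < r \<and>
     (\<forall>x y. x \<noteq> y \<longrightarrow> v x \<noteq> v y) \<and>
     (\<forall>x. m \<le> norm (v x) \<and> norm (v x) \<le> M) \<and>
     (\<forall>x y. x \<noteq> y \<longrightarrow> (INF t. norm (pos v x t - pos v y t)) \<ge> r) \<and>
     (\<forall>\<rho>. \<rho> < r / 2 \<longrightarrow> (\<forall>t x y. x \<noteq> y \<longrightarrow>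
         cball (pos v x t) \<rho> \<inter> cball (pos v y t) \<rho> = {}))"
proof (rule exI[of _ "cross_velocity arctan_speed"], rule exI[of _ 1], rule exI[of _ 10],
    rule exI[of _ 1], intro conjI allI impI)
  let ?v = "cross_velocity arctan_speed"
  have separated: "1 \<le> dist (pos ?v x t) (pos ?v y t)" if "x \<noteq> y" for x y t
    using cross_velocity_separation[OF strict_mono_arctan_speed that] by (simp add: dist_norm)
  show "?v x \<noteq> ?v y" if "x \<noteq> y" for x y
    using inj_cross_velocity[OF strict_mono_arctan_speed] that by (simp add: inj_eq)
  show "1 \<le> norm (?v x)" "norm (?v x) \<le> 10" for x
    using norm_cross_velocity_bounds[of 1 arctan_speed 5 x] arctan_speed_bounds by simp_all
  show "1 \<le> (INF t. norm (pos ?v x t - pos ?v y t))" if "x \<noteq> y" for x y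
    using separated[OF that] by (intro cINF_greatest) (simp_all add: dist_norm)
  show "cball (pos ?v x t) \<rho> \<inter> cball (pos ?v y t) \<rho> = {}"
    if "\<rho> < 1 / 2" "x \<noteq> y" for \<rho> t x y
    using separated[OF that(2), of t] that(1) by (intro disjoint_cballI) linarith
qed simp_all

end
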